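(* Let $I$ be an ideal on a cardinal $\kappa$ and let $\theta<\kappa$ be a regular cardinal. The following are equivalent: (1) $I$ is weakly $\theta$-saturated and $\theta$-indecomposable. (2) Whenever $\langle B_i:i<\theta\rangle$ is a $\subseteq$-increasing sequence of subsets of $\kappa$, there is $i^*<\theta$ such that $B_i=_I\bigcup_{j<\theta}B_j$ for all $i$ with $i^*\leq i<\theta$. (3) Whenever $\langle A_i:i<\theta\rangle$ is a sequence of $I$-positive subsets of $\kappa$, we have $\bigcap_{i<\theta}\bigcup_{i\leq j<\theta}A_j\neq\emptyset$. (4) If $\langle S_\alpha:\alpha<\kappa\rangle$ is a sequence of sets of ordinals with $|S_\alpha|<\theta$ for all $\alpha$, then every sequence $\langle h_i:i<\theta\rangle$ of functions in $\prod_{\alpha<\kappa}S_\alpha$ that is increasing in the pointwise order ($i<j$ implies $h_i(\alpha)\leq h_j(\alpha)$ for all $\alpha$) is eventually constant modulo $I$, i.e. there is $i^*<\theta$ with $h_i=_I h_{i^*}$ for all $i\geq i^*$. (5) Every function $f:\kappa\to\theta$ is bounded below $\theta$ almost everywhere, i.e. there is $\beta<\theta$ with $\{\alpha<\kappa: f(\alpha)\geq\beta\}\in I$.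
   Context: By an ideal on a cardinal $\kappa$ we mean a proper ideal on $\kappa$ containing all bounded subsets of $\kappa$. A set is $I$-positive if it is not in $I$. $A=_I B$ means $A\setminus B\in I$ and $B\setminus A\in I$; for functions, $f=_I g$ means $\{\alpha:f(\alpha)\neq g(\alpha)\}\in I$. $I$ is weakly $\theta$-saturated if there is no partition of $\kappa$ into $\theta$ pairwise disjoint $I$-positive sets. $I$ is $\theta$-indecomposable if whenever $\langle A_i:i<\theta\rangle$ are subsets of $\kappa$ with $\bigcup_{i<\theta}A_i\notin I$, there is $w\subseteq\theta$ with $|w|<\theta$ and $\bigcup_{i\in w}A_i\notin I$. *)

theory Defs
  imports Main
begin

text \<open>A cardinal kappa is represented by a cardinal-order relation k (Card_order k),
  i.e. an initial well-order; its elements are the ordinals below kappa, the field of k.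
  The (non-strict) order is membership in k; the strict order is (x,y) in k with x \<noteq> y.\<close>

definition bounded_in :: "'a rel \<Rightarrow> 'a set \<Rightarrow> bool" where
  "bounded_in k A \<longleftrightarrow> (\<exists>\<beta>\<in>Field k. \<forall>\<alpha>\<in>A. (\<alpha>, \<beta>) \<in> k \<and> \<alpha> \<noteq> \<beta>)"

definition ideal_on :: "'a rel \<Rightarrow> 'a set set \<Rightarrow> bool" where
  "ideal_on k I \<longleftrightarrow>
     I \<subseteq> Pow (Field k) \<and>
     (\<forall>A\<in>I. \<forall>B. B \<subseteq> A \<longrightarrow> B \<in> I) \<and>
     (\<forall>A\<in>I. \<forall>B\<in>I. A \<union> B \<in> I) \<and>
     Field k \<notin> I \<and>
     (\<forall>A. A \<subseteq> Field k \<and> bounded_in k A \<longrightarrow> A \<in> I)"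

definition eq_mod :: "'a set set \<Rightarrow> 'a set \<Rightarrow> 'a set \<Rightarrow> bool" where
  "eq_mod I A B \<longleftrightarrow> A - B \<in> I \<and> B - A \<in> I"

definition weakly_saturated :: "'a rel \<Rightarrow> 'b rel \<Rightarrow> 'a set set \<Rightarrow> bool" where
  "weakly_saturated k \<theta> I \<longleftrightarrow>
     \<not> (\<exists>P :: 'b \<Rightarrow> 'a set.
          (\<forall>i\<in>Field \<theta>. P i \<subseteq> Field k \<and> P i \<notin> I) \<and>
          (\<forall>i\<in>Field \<theta>. \<forall>j\<in>Field \<theta>. i \<noteq> j \<longrightarrow> P i \<inter> P j = {}) \<and>
          (\<Union>i\<in>Field \<theta>. P i) = Field k)"

definition indecomposable :: "'a rel \<Rightarrow> 'b rel \<Rightarrow> 'a set set \<Rightarrow> bool" where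
  "indecomposable k \<theta> I \<longleftrightarrow>
     (\<forall>A :: 'b \<Rightarrow> 'a set.
        (\<forall>i\<in>Field \<theta>. A i \<subseteq> Field k) \<and> (\<Union>i\<in>Field \<theta>. A i) \<notin> I \<longrightarrow>
        (\<exists>w. w \<subseteq> Field \<theta> \<and> ordLess2 (card_of w) \<theta> \<and> (\<Union>i\<in>w. A i) \<notin> I))"

end

theory Submission
  imports Defs "HOL-Library.Disjoint_Sets"
begin

text \<open>All five conditions are compared with (5), the boundedness modulo \<open>I\<close> of every
  \<open>f : \<kappa> \<rightarrow> \<theta>\<close>. From (5) one gets the other conditions by choosing for each point an index
  (where it enters an increasing sequence, leaves the tail of a sequence, lies in a partition
  piece, or where a pointwise increasing sequence with fewer than \<open>\<theta>\<close> values stabilizes, which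
  happens by regularity) and bounding that index function modulo \<open>I\<close>. Conversely, a given \<open>f\<close> is
  encoded by the sequences \<open>f\<^sup>-\<^sup>1[0, i)\<close>, \<open>f\<^sup>-\<^sup>1[i, \<theta>)\<close> and \<open>min(i, f)\<close>. The substantial direction is
  (1) \<open>\<Rightarrow>\<close> (5): if \<open>f\<close> is unbounded, indecomposability finds inside every tail \<open>f\<^sup>-\<^sup>1[b, \<theta>)\<close> a
  positive interval \<open>f\<^sup>-\<^sup>1[b, c)\<close>; a maximal disjoint family of such intervals is cofinal in \<open>\<theta>\<close>,
  hence has \<open>\<theta>\<close> members by regularity, contradicting weak saturation.\<close>

unbundle cardinal_syntax

definition functions_bounded_mod :: "'a rel \<Rightarrow> 'b rel \<Rightarrow> 'a set set \<Rightarrow> bool" where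
  "functions_bounded_mod k \<theta> I \<longleftrightarrow> (\<forall>f :: 'a \<Rightarrow> 'b. (\<forall>\<alpha>\<in>Field k. f \<alpha> \<in> Field \<theta>) \<longrightarrow>
     (\<exists>\<beta>\<in>Field \<theta>. {\<alpha> \<in> Field k. (\<beta>, f \<alpha>) \<in> \<theta>} \<in> I))"

definition increasing_sequences_stabilize :: "'a rel \<Rightarrow> 'b rel \<Rightarrow> 'a set set \<Rightarrow> bool" where
  "increasing_sequences_stabilize k \<theta> I \<longleftrightarrow> (\<forall>B :: 'b \<Rightarrow> 'a set.
     (\<forall>i\<in>Field \<theta>. B i \<subseteq> Field k) \<and>
     (\<forall>i\<in>Field \<theta>. \<forall>j\<in>Field \<theta>. (i, j) \<in> \<theta> \<longrightarrow> B i \<subseteq> B j) \<longrightarrow>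
     (\<exists>i0\<in>Field \<theta>. \<forall>i\<in>Field \<theta>. (i0, i) \<in> \<theta> \<longrightarrow> eq_mod I (B i) (\<Union>j\<in>Field \<theta>. B j)))"

definition positive_limsup_nonempty :: "'a rel \<Rightarrow> 'b rel \<Rightarrow> 'a set set \<Rightarrow> bool" where
  "positive_limsup_nonempty k \<theta> I \<longleftrightarrow> (\<forall>A :: 'b \<Rightarrow> 'a set.
     (\<forall>i\<in>Field \<theta>. A i \<subseteq> Field k \<and> A i \<notin> I) \<longrightarrow>
     (\<Inter>i\<in>Field \<theta>. \<Union>j\<in>{j \<in> Field \<theta>. (i, j) \<in> \<theta>}. A j) \<noteq> {})"

definition increasing_functions_stabilize :: "'a rel \<Rightarrow> 'b rel \<Rightarrow> 'a set set \<Rightarrow> bool" where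
  "increasing_functions_stabilize k \<theta> I \<longleftrightarrow> (\<forall>r :: 'a rel. Well_order r \<longrightarrow>
     (\<forall>(S :: 'a \<Rightarrow> 'a set) (h :: 'b \<Rightarrow> 'a \<Rightarrow> 'a).
       (\<forall>\<alpha>\<in>Field k. S \<alpha> \<subseteq> Field r \<and> |S \<alpha>| <o \<theta>) \<and>
       (\<forall>i\<in>Field \<theta>. \<forall>\<alpha>\<in>Field k. h i \<alpha> \<in> S \<alpha>) \<and>
       (\<forall>i\<in>Field \<theta>. \<forall>j\<in>Field \<theta>. (i, j) \<in> \<theta> \<longrightarrow> (\<forall>\<alpha>\<in>Field k. (h i \<alpha>, h j \<alpha>) \<in> r)) \<longrightarrow>
       (\<exists>i0\<in>Field \<theta>. \<forall>i\<in>Field \<theta>. (i0, i) \<in> \<theta> \<longrightarrow> {\<alpha> \<in> Field k. h i \<alpha> \<noteq> h i0 \<alpha>} \<in> I)))"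

lemma ideal_on_subset: "ideal_on k I \<Longrightarrow> A \<in> I \<Longrightarrow> B \<subseteq> A \<Longrightarrow> B \<in> I"
  unfolding ideal_on_def by blast

lemma ideal_on_Un: "ideal_on k I \<Longrightarrow> A \<in> I \<Longrightarrow> B \<in> I \<Longrightarrow> A \<union> B \<in> I"
  unfolding ideal_on_def by blast

lemma choose_index:
  assumes "Z \<noteq> {}" and "\<And>x. x \<in> X \<Longrightarrow> \<exists>i\<in>Z. P x i"
  obtains f where "\<And>x. f x \<in> Z" and "\<And>x. x \<in> X \<Longrightarrow> P x (f x)"
proof
  define f where "f x = (SOME i. i \<in> Z \<and> (x \<in> X \<longrightarrow> P x i))" for x
  have "\<exists>i. i \<in> Z \<and> (x \<in> X \<longrightarrow> P x i)" for x
    using assms by (cases "x \<in> X") auto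
  then show "f x \<in> Z" and "x \<in> X \<Longrightarrow> P x (f x)" for x
    unfolding f_def by (metis (no_types, lifting) someI_ex)+
qed

lemma maximal_disjoint_subfamily:
  obtains M where "M \<subseteq> S" and "disjoint_family_on F M"
    and "\<And>c. c \<in> S - M \<Longrightarrow> \<not> disjoint_family_on F (insert c M)"
proof -
  define \<F> where "\<F> = {M. M \<subseteq> S \<and> disjoint_family_on F M}"
  have "\<Union>\<C> \<in> \<F>" if chain: "\<C> \<in> chains \<F>" for \<C>
  proof -
    have "disjoint_family_on F (\<Union>\<C>)"
      unfolding disjoint_family_on_def
    proof (intro ballI impI)
      fix m n assume "m \<in> \<Union>\<C>" "n \<in> \<Union>\<C>" "m \<noteq> n"
      then obtain N where "N \<in> \<C>" "m \<in> N" "n \<in> N"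
        using chainsD[OF chain] by blast
      moreover have "disjoint_family_on F N"
        using chainsD2[OF chain] \<open>N \<in> \<C>\<close> by (auto simp: \<F>_def)
      ultimately show "F m \<inter> F n = {}"
        using \<open>m \<noteq> n\<close> by (simp add: disjoint_family_onD)
    qed
    then show ?thesis
      using chainsD2[OF chain] by (auto simp: \<F>_def)
  qed
  then obtain M where M: "M \<in> \<F>" and max: "\<forall>X\<in>\<F>. M \<subseteq> X \<longrightarrow> X = M"
    using Zorn_Lemma[of \<F>] by blast
  show thesis
  proof (rule that)
    show "M \<subseteq> S" and "disjoint_family_on F M"
      using M by (auto simp: \<F>_def)
    show "\<not> disjoint_family_on F (insert c M)" if "c \<in> S - M" for c
      using that M max[rule_format, of "insert c M"] by (auto simp: \<F>_def)
  qed
qed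

locale ideal_regular_card =
  fixes k :: "'a rel" and \<theta> :: "'b rel" and I :: "'a set set"
  assumes ideal: "ideal_on k I"
    and Cinfinite_\<theta>: "Cinfinite \<theta>" and regular_\<theta>: "regularCard \<theta>"
begin

lemma wo_rel_\<theta>: "wo_rel \<theta>"
  using Cinfinite_\<theta> by (simp add: wo_rel_def card_order_on_well_order_on)

lemma \<theta>_refl: "i \<in> Field \<theta> \<Longrightarrow> (i, i) \<in> \<theta>"
  using wo_rel.REFL[OF wo_rel_\<theta>] by (simp add: refl_on_def)

lemma \<theta>_trans: "(i, j) \<in> \<theta> \<Longrightarrow> (j, l) \<in> \<theta> \<Longrightarrow> (i, l) \<in> \<theta>"
  using wo_rel.TRANS[OF wo_rel_\<theta>] by (rule transD)

lemma \<theta>_antisym: "(i, j) \<in> \<theta> \<Longrightarrow> (j, i) \<in> \<theta> \<Longrightarrow> i = j"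
  using wo_rel.ANTISYM[OF wo_rel_\<theta>] by (rule antisymD)

lemma \<theta>_total: "i \<in> Field \<theta> \<Longrightarrow> j \<in> Field \<theta> \<Longrightarrow> (i, j) \<in> \<theta> \<or> (j, i) \<in> \<theta>"
  using wo_rel.TOTALS[OF wo_rel_\<theta>] by blast

lemma not_le_imp_underS: "i \<in> Field \<theta> \<Longrightarrow> j \<in> Field \<theta> \<Longrightarrow> (i, j) \<notin> \<theta> \<Longrightarrow> j \<in> underS \<theta> i"
  using \<theta>_total \<theta>_refl by (auto simp: underS_def)

lemma le_imp_not_underS: "(j, i) \<in> \<theta> \<Longrightarrow> i \<notin> underS \<theta> j"
  using \<theta>_antisym by (auto simp: underS_def)

lemma underS_mono: "(i, j) \<in> \<theta> \<Longrightarrow> underS \<theta> i \<subseteq> underS \<theta> j"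
  using wo_rel.TRANS[OF wo_rel_\<theta>] wo_rel.ANTISYM[OF wo_rel_\<theta>] by (rule underS_incr)

lemma le_underS_trans: "(i, j) \<in> \<theta> \<Longrightarrow> j \<in> underS \<theta> l \<Longrightarrow> i \<in> underS \<theta> l"
  using \<theta>_trans \<theta>_antisym by (auto simp: underS_def)

lemma Field_\<theta>_nonempty: "Field \<theta> \<noteq> {}"
  using Cinfinite_\<theta> by (auto simp: cinfinite_def)

lemma \<theta>_no_max: "i \<in> Field \<theta> \<Longrightarrow> \<exists>j\<in>Field \<theta>. i \<in> underS \<theta> j"
  using Cinfinite_limit[OF _ Cinfinite_\<theta>] by (auto simp: underS_def)

lemma small_if_bounded: "j \<in> Field \<theta> \<Longrightarrow> A \<subseteq> underS \<theta> j \<Longrightarrow> |A| <o \<theta>"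
  by (rule ordLeq_ordLess_trans[OF card_of_mono1 card_of_underS[OF conjunct2[OF Cinfinite_\<theta>]]])

lemma bounded_if_not_cofinal:
  assumes "A \<subseteq> Field \<theta>" and "\<not> cofinal A \<theta>"
  obtains j where "j \<in> Field \<theta>" and "A \<subseteq> underS \<theta> j"
proof -
  obtain a where a: "a \<in> Field \<theta>" and above: "\<forall>b\<in>A. \<not> (a \<noteq> b \<and> (a, b) \<in> \<theta>)"
    using assms(2) unfolding cofinal_def by blast
  have "(b, a) \<in> \<theta>" if "b \<in> A" for b
    using that above assms(1) \<theta>_total[OF a, of b] \<theta>_refl[OF a] by (cases "a = b") auto
  moreover obtain j where "j \<in> Field \<theta>" and "a \<in> underS \<theta> j"
    using \<theta>_no_max[OF a] by blast
  ultimately show thesis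
    using that le_underS_trans by blast
qed

lemma bounded_if_small:
  assumes "A \<subseteq> Field \<theta>" and "|A| <o \<theta>"
  obtains j where "j \<in> Field \<theta>" and "A \<subseteq> underS \<theta> j"
proof (rule bounded_if_not_cofinal[OF assms(1)])
  show "\<not> cofinal A \<theta>"
  proof
    assume "cofinal A \<theta>"
    then have "|A| =o \<theta>"
      using regular_\<theta> assms(1) unfolding regularCard_def by blast
    then show False
      using not_ordLess_ordIso assms(2) by blast
  qed
qed

lemma not_weakly_saturated_if_disjoint_family:
  assumes disj: "disjoint_family_on P (Field \<theta>)" and pos: "\<forall>i\<in>Field \<theta>. P i \<subseteq> Field k \<and> P i \<notin> I"
  shows "\<not> weakly_saturated k \<theta> I"
proof -
  obtain i0 where i0: "i0 \<in> Field \<theta>"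
    using Field_\<theta>_nonempty by blast
  define Q where "Q = P(i0 := P i0 \<union> (Field k - (\<Union>i\<in>Field \<theta>. P i)))"
  have "\<forall>i\<in>Field \<theta>. Q i \<subseteq> Field k \<and> Q i \<notin> I"
    using pos ideal_on_subset[OF ideal] unfolding Q_def by auto
  moreover have "\<forall>i\<in>Field \<theta>. \<forall>j\<in>Field \<theta>. i \<noteq> j \<longrightarrow> Q i \<inter> Q j = {}"
    using disj unfolding Q_def disjoint_family_on_def by auto
  moreover have "(\<Union>i\<in>Field \<theta>. Q i) = Field k"
    using pos i0 unfolding Q_def by auto
  ultimately show ?thesis
    unfolding weakly_saturated_def by blast
qed

lemma increasing_small_range_stabilizes:
  assumes "antisym r"
    and mono: "\<And>i j. i \<in> Field \<theta> \<Longrightarrow> j \<in> Field \<theta> \<Longrightarrow> (i, j) \<in> \<theta> \<Longrightarrow> (h i, h j) \<in> r"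
    and range: "h ` Field \<theta> \<subseteq> S" and small: "|S| <o \<theta>"
  shows "\<exists>d\<in>Field \<theta>. \<forall>j\<in>Field \<theta>. (d, j) \<in> \<theta> \<longrightarrow> h j = h d"
proof -
  define p where "p = inv_into (Field \<theta>) h"
  have "p ` h ` Field \<theta> \<subseteq> Field \<theta>"
    unfolding p_def by (auto intro: inv_into_into)
  moreover have "|p ` h ` Field \<theta>| <o \<theta>"
    using card_of_image ordLeq_ordLess_trans[OF card_of_mono1[OF range] small]
    by (rule ordLeq_ordLess_trans)
  ultimately obtain d where d: "d \<in> Field \<theta>" and below: "p ` h ` Field \<theta> \<subseteq> underS \<theta> d"
    by (rule bounded_if_small)
  have "h j = h d" if j: "j \<in> Field \<theta>" and "(d, j) \<in> \<theta>" for j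
  proof -
    have "p (h j) \<in> Field \<theta>" and "h (p (h j)) = h j"
      using j unfolding p_def by (auto intro: inv_into_into f_inv_into_f)
    moreover have "(p (h j), d) \<in> \<theta>"
      using below j by (auto simp: underS_def)
    ultimately have "(h j, h d) \<in> r"
      using mono d by metis
    moreover have "(h d, h j) \<in> r"
      using mono d j \<open>(d, j) \<in> \<theta>\<close> by blast
    ultimately show "h j = h d"
      using antisymD[OF \<open>antisym r\<close>] by blast
  qed
  then show ?thesis
    using d by blast
qed

lemma weakly_saturated_if_functions_bounded:
  assumes bounded: "functions_bounded_mod k \<theta> I"
  shows "weakly_saturated k \<theta> I"
  unfolding weakly_saturated_def
proof
  assume "\<exists>P :: 'b \<Rightarrow> 'a set. (\<forall>i\<in>Field \<theta>. P i \<subseteq> Field k \<and> P i \<notin> I) \<and>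
    (\<forall>i\<in>Field \<theta>. \<forall>j\<in>Field \<theta>. i \<noteq> j \<longrightarrow> P i \<inter> P j = {}) \<and> (\<Union>i\<in>Field \<theta>. P i) = Field k"
  then obtain P :: "'b \<Rightarrow> 'a set" where pos: "\<forall>i\<in>Field \<theta>. P i \<subseteq> Field k \<and> P i \<notin> I"
    and disj: "\<forall>i\<in>Field \<theta>. \<forall>j\<in>Field \<theta>. i \<noteq> j \<longrightarrow> P i \<inter> P j = {}"
    and cover: "(\<Union>i\<in>Field \<theta>. P i) = Field k"
    by blast
  obtain f where f: "\<And>\<alpha>. f \<alpha> \<in> Field \<theta>" and fP: "\<And>\<alpha>. \<alpha> \<in> Field k \<Longrightarrow> \<alpha> \<in> P (f \<alpha>)"
    using choose_index[OF Field_\<theta>_nonempty, of "Field k" "\<lambda>\<alpha> i. \<alpha> \<in> P i"] cover by blast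
  then obtain \<beta> where \<beta>: "\<beta> \<in> Field \<theta>" and null: "{\<alpha> \<in> Field k. (\<beta>, f \<alpha>) \<in> \<theta>} \<in> I"
    using bounded unfolding functions_bounded_mod_def by blast
  have "P \<beta> \<subseteq> {\<alpha> \<in> Field k. (\<beta>, f \<alpha>) \<in> \<theta>}"
  proof
    fix \<alpha> assume \<alpha>: "\<alpha> \<in> P \<beta>"
    then have "\<alpha> \<in> Field k"
      using pos \<beta> by blast
    then have "f \<alpha> = \<beta>"
      using \<alpha> fP[of \<alpha>] disj f[of \<alpha>] \<beta> by blast
    then show "\<alpha> \<in> {\<alpha> \<in> Field k. (\<beta>, f \<alpha>) \<in> \<theta>}"
      using \<open>\<alpha> \<in> Field k\<close> \<theta>_refl[OF \<beta>] by simp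
  qed
  then show False
    using ideal_on_subset[OF ideal null] pos \<beta> by blast
qed

lemma indecomposable_if_functions_bounded:
  assumes bounded: "functions_bounded_mod k \<theta> I"
  shows "indecomposable k \<theta> I"
  unfolding indecomposable_def
proof (intro allI impI)
  fix A :: "'b \<Rightarrow> 'a set"
  assume "(\<forall>i\<in>Field \<theta>. A i \<subseteq> Field k) \<and> (\<Union>i\<in>Field \<theta>. A i) \<notin> I"
  then have sub: "\<forall>i\<in>Field \<theta>. A i \<subseteq> Field k" and pos: "(\<Union>i\<in>Field \<theta>. A i) \<notin> I"
    by blast+
  obtain f where f: "\<And>\<alpha>. f \<alpha> \<in> Field \<theta>"
    and fA: "\<And>\<alpha>. \<alpha> \<in> (\<Union>i\<in>Field \<theta>. A i) \<Longrightarrow> \<alpha> \<in> A (f \<alpha>)"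
    using choose_index[OF Field_\<theta>_nonempty, of "\<Union>i\<in>Field \<theta>. A i" "\<lambda>\<alpha> i. \<alpha> \<in> A i"] by blast
  then obtain \<beta> where \<beta>: "\<beta> \<in> Field \<theta>" and null: "{\<alpha> \<in> Field k. (\<beta>, f \<alpha>) \<in> \<theta>} \<in> I"
    using bounded unfolding functions_bounded_mod_def by blast
  have "(\<Union>i\<in>Field \<theta>. A i) \<subseteq> (\<Union>i\<in>underS \<theta> \<beta>. A i) \<union> {\<alpha> \<in> Field k. (\<beta>, f \<alpha>) \<in> \<theta>}"
    using sub fA f not_le_imp_underS[OF \<beta>] by blast
  then have "(\<Union>i\<in>underS \<theta> \<beta>. A i) \<notin> I"
    using pos null ideal_on_Un[OF ideal] ideal_on_subset[OF ideal] by blast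
  then show "\<exists>w. w \<subseteq> Field \<theta> \<and> |w| <o \<theta> \<and> (\<Union>i\<in>w. A i) \<notin> I"
    by (intro exI[of _ "underS \<theta> \<beta>"] conjI Order_Relation.underS_Field small_if_bounded[OF \<beta> order_refl])
qed

lemma increasing_sequences_stabilize_if_functions_bounded:
  assumes bounded: "functions_bounded_mod k \<theta> I"
  shows "increasing_sequences_stabilize k \<theta> I"
  unfolding increasing_sequences_stabilize_def
proof (intro allI impI)
  fix B :: "'b \<Rightarrow> 'a set"
  assume "(\<forall>i\<in>Field \<theta>. B i \<subseteq> Field k) \<and> (\<forall>i\<in>Field \<theta>. \<forall>j\<in>Field \<theta>. (i, j) \<in> \<theta> \<longrightarrow> B i \<subseteq> B j)"
  then have sub: "\<forall>i\<in>Field \<theta>. B i \<subseteq> Field k"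
    and mono: "\<forall>i\<in>Field \<theta>. \<forall>j\<in>Field \<theta>. (i, j) \<in> \<theta> \<longrightarrow> B i \<subseteq> B j"
    by blast+
  define U where "U = (\<Union>j\<in>Field \<theta>. B j)"
  obtain f where f: "\<And>\<alpha>. f \<alpha> \<in> Field \<theta>" and fB: "\<And>\<alpha>. \<alpha> \<in> U \<Longrightarrow> \<alpha> \<in> B (f \<alpha>)"
    using choose_index[OF Field_\<theta>_nonempty, of U "\<lambda>\<alpha> i. \<alpha> \<in> B i"] unfolding U_def by blast
  then obtain \<beta> where \<beta>: "\<beta> \<in> Field \<theta>" and null: "{\<alpha> \<in> Field k. (\<beta>, f \<alpha>) \<in> \<theta>} \<in> I"
    using bounded unfolding functions_bounded_mod_def by blast
  have "eq_mod I (B i) U" if i: "i \<in> Field \<theta>" "(\<beta>, i) \<in> \<theta>" for i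
  proof -
    have "U - B i \<subseteq> {\<alpha> \<in> Field k. (\<beta>, f \<alpha>) \<in> \<theta>}"
    proof
      fix \<alpha> assume \<alpha>: "\<alpha> \<in> U - B i"
      then have "(f \<alpha>, i) \<notin> \<theta>"
        using fB mono f i by blast
      then have "(i, f \<alpha>) \<in> \<theta>"
        using \<theta>_total[OF i(1) f] by blast
      then show "\<alpha> \<in> {\<alpha> \<in> Field k. (\<beta>, f \<alpha>) \<in> \<theta>}"
        using \<alpha> sub \<theta>_trans[OF i(2)] unfolding U_def by blast
    qed
    moreover have "B i - U \<subseteq> {\<alpha> \<in> Field k. (\<beta>, f \<alpha>) \<in> \<theta>}"
      using i unfolding U_def by blast
    ultimately show ?thesis
      unfolding eq_mod_def using ideal_on_subset[OF ideal null] by blast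
  qed
  then show "\<exists>i0\<in>Field \<theta>. \<forall>i\<in>Field \<theta>. (i0, i) \<in> \<theta> \<longrightarrow> eq_mod I (B i) (\<Union>j\<in>Field \<theta>. B j)"
    using \<beta> unfolding U_def by blast
qed

lemma functions_bounded_if_increasing_sequences_stabilize:
  assumes stabilize: "increasing_sequences_stabilize k \<theta> I"
  shows "functions_bounded_mod k \<theta> I"
  unfolding functions_bounded_mod_def
proof (intro allI impI)
  fix f :: "'a \<Rightarrow> 'b" assume f: "\<forall>\<alpha>\<in>Field k. f \<alpha> \<in> Field \<theta>"
  define B where "B i = {\<alpha> \<in> Field k. f \<alpha> \<in> underS \<theta> i}" for i
  have increasing: "(\<forall>i\<in>Field \<theta>. B i \<subseteq> Field k) \<and>
      (\<forall>i\<in>Field \<theta>. \<forall>j\<in>Field \<theta>. (i, j) \<in> \<theta> \<longrightarrow> B i \<subseteq> B j)"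
    unfolding B_def using underS_mono by blast
  obtain i0 where i0: "i0 \<in> Field \<theta>"
    and "\<forall>i\<in>Field \<theta>. (i0, i) \<in> \<theta> \<longrightarrow> eq_mod I (B i) (\<Union>j\<in>Field \<theta>. B j)"
    using stabilize[unfolded increasing_sequences_stabilize_def, rule_format, OF increasing] by blast
  then have "eq_mod I (B i0) (\<Union>j\<in>Field \<theta>. B j)"
    using \<theta>_refl by blast
  moreover have "(\<Union>j\<in>Field \<theta>. B j) = Field k"
    using f \<theta>_no_max unfolding B_def by blast
  moreover have "Field k - B i0 = {\<alpha> \<in> Field k. (i0, f \<alpha>) \<in> \<theta>}"
    using f not_le_imp_underS[OF i0] le_imp_not_underS unfolding B_def by blast
  ultimately show "\<exists>\<beta>\<in>Field \<theta>. {\<alpha> \<in> Field k. (\<beta>, f \<alpha>) \<in> \<theta>} \<in> I"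
    using i0 unfolding eq_mod_def by auto
qed

lemma positive_limsup_nonempty_if_functions_bounded:
  assumes bounded: "functions_bounded_mod k \<theta> I"
  shows "positive_limsup_nonempty k \<theta> I"
  unfolding positive_limsup_nonempty_def
proof (intro allI impI notI)
  fix A :: "'b \<Rightarrow> 'a set"
  assume pos: "\<forall>i\<in>Field \<theta>. A i \<subseteq> Field k \<and> A i \<notin> I"
    and empty: "(\<Inter>i\<in>Field \<theta>. \<Union>j\<in>{j \<in> Field \<theta>. (i, j) \<in> \<theta>}. A j) = {}"
  have escapes: "\<exists>i\<in>Field \<theta>. \<forall>j\<in>Field \<theta>. (i, j) \<in> \<theta> \<longrightarrow> \<alpha> \<notin> A j"
    if "\<alpha> \<in> Field k" for \<alpha>
    using empty by blast
  obtain f where f: "\<And>\<alpha>. f \<alpha> \<in> Field \<theta>"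
    and fA: "\<And>\<alpha>. \<alpha> \<in> Field k \<Longrightarrow> \<forall>j\<in>Field \<theta>. (f \<alpha>, j) \<in> \<theta> \<longrightarrow> \<alpha> \<notin> A j"
    using choose_index[of "Field \<theta>" "Field k" "\<lambda>\<alpha> i. \<forall>j\<in>Field \<theta>. (i, j) \<in> \<theta> \<longrightarrow> \<alpha> \<notin> A j"]
      Field_\<theta>_nonempty escapes by auto
  then obtain \<beta> where \<beta>: "\<beta> \<in> Field \<theta>" and null: "{\<alpha> \<in> Field k. (\<beta>, f \<alpha>) \<in> \<theta>} \<in> I"
    using bounded unfolding functions_bounded_mod_def by blast
  have "A \<beta> \<subseteq> {\<alpha> \<in> Field k. (\<beta>, f \<alpha>) \<in> \<theta>}"
    using pos fA \<theta>_total[OF \<beta> f] \<beta> by blast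
  then show False
    using ideal_on_subset[OF ideal null] pos \<beta> by blast
qed

lemma functions_bounded_if_positive_limsup_nonempty:
  assumes limsup: "positive_limsup_nonempty k \<theta> I"
  shows "functions_bounded_mod k \<theta> I"
  unfolding functions_bounded_mod_def
proof (intro allI impI, rule ccontr)
  fix f :: "'a \<Rightarrow> 'b"
  assume f: "\<forall>\<alpha>\<in>Field k. f \<alpha> \<in> Field \<theta>"
    and unbounded: "\<not> (\<exists>\<beta>\<in>Field \<theta>. {\<alpha> \<in> Field k. (\<beta>, f \<alpha>) \<in> \<theta>} \<in> I)"
  define A where "A i = {\<alpha> \<in> Field k. (i, f \<alpha>) \<in> \<theta>}" for i
  have "\<forall>i\<in>Field \<theta>. A i \<subseteq> Field k \<and> A i \<notin> I"
    using unbounded unfolding A_def by blast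
  then obtain \<alpha> where \<alpha>: "\<alpha> \<in> (\<Inter>i\<in>Field \<theta>. \<Union>j\<in>{j \<in> Field \<theta>. (i, j) \<in> \<theta>}. A j)"
    using limsup unfolding positive_limsup_nonempty_def by blast
  then have "\<alpha> \<in> Field k"
    using Field_\<theta>_nonempty unfolding A_def by blast
  then obtain c where c: "c \<in> Field \<theta>" and "f \<alpha> \<in> underS \<theta> c"
    using f \<theta>_no_max by blast
  moreover obtain j where "(c, j) \<in> \<theta>" and "(j, f \<alpha>) \<in> \<theta>"
    using \<alpha> c unfolding A_def by blast
  ultimately show False
    using le_underS_trans le_imp_not_underS by blast
qed

lemma increasing_functions_stabilize_if_functions_bounded:
  assumes bounded: "functions_bounded_mod k \<theta> I"
  shows "increasing_functions_stabilize k \<theta> I"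
  unfolding increasing_functions_stabilize_def
proof (intro allI impI)
  fix r :: "'a rel" and S :: "'a \<Rightarrow> 'a set" and h :: "'b \<Rightarrow> 'a \<Rightarrow> 'a"
  assume "Well_order r"
  assume "(\<forall>\<alpha>\<in>Field k. S \<alpha> \<subseteq> Field r \<and> |S \<alpha>| <o \<theta>) \<and>
    (\<forall>i\<in>Field \<theta>. \<forall>\<alpha>\<in>Field k. h i \<alpha> \<in> S \<alpha>) \<and>
    (\<forall>i\<in>Field \<theta>. \<forall>j\<in>Field \<theta>. (i, j) \<in> \<theta> \<longrightarrow> (\<forall>\<alpha>\<in>Field k. (h i \<alpha>, h j \<alpha>) \<in> r))"
  then have small: "\<And>\<alpha>. \<alpha> \<in> Field k \<Longrightarrow> |S \<alpha>| <o \<theta>"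
    and range: "\<And>\<alpha>. \<alpha> \<in> Field k \<Longrightarrow> (\<lambda>i. h i \<alpha>) ` Field \<theta> \<subseteq> S \<alpha>"
    and mono: "\<And>i j \<alpha>. i \<in> Field \<theta> \<Longrightarrow> j \<in> Field \<theta> \<Longrightarrow> (i, j) \<in> \<theta> \<Longrightarrow> \<alpha> \<in> Field k \<Longrightarrow>
      (h i \<alpha>, h j \<alpha>) \<in> r"
    by blast+
  have "antisym r"
    using \<open>Well_order r\<close> wo_rel.ANTISYM unfolding wo_rel_def by blast
  have stabilizes: "\<exists>d\<in>Field \<theta>. \<forall>j\<in>Field \<theta>. (d, j) \<in> \<theta> \<longrightarrow> h j \<alpha> = h d \<alpha>"
    if "\<alpha> \<in> Field k" for \<alpha>
    by (rule increasing_small_range_stabilizes[of r "\<lambda>i. h i \<alpha>",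
          OF \<open>antisym r\<close> mono[OF _ _ _ that] range[OF that] small[OF that]])
  obtain g where g: "\<And>\<alpha>. g \<alpha> \<in> Field \<theta>"
    and stable: "\<And>\<alpha>. \<alpha> \<in> Field k \<Longrightarrow> \<forall>j\<in>Field \<theta>. (g \<alpha>, j) \<in> \<theta> \<longrightarrow> h j \<alpha> = h (g \<alpha>) \<alpha>"
    using choose_index[of "Field \<theta>" "Field k" "\<lambda>\<alpha> d. \<forall>j\<in>Field \<theta>. (d, j) \<in> \<theta> \<longrightarrow> h j \<alpha> = h d \<alpha>"]
      Field_\<theta>_nonempty stabilizes by auto
  then obtain \<beta> where \<beta>: "\<beta> \<in> Field \<theta>" and null: "{\<alpha> \<in> Field k. (\<beta>, g \<alpha>) \<in> \<theta>} \<in> I"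
    using bounded unfolding functions_bounded_mod_def by blast
  have "{\<alpha> \<in> Field k. h i \<alpha> \<noteq> h \<beta> \<alpha>} \<in> I" if i: "i \<in> Field \<theta>" "(\<beta>, i) \<in> \<theta>" for i
  proof -
    have "h i \<alpha> = h \<beta> \<alpha>" if "\<alpha> \<in> Field k" and "(\<beta>, g \<alpha>) \<notin> \<theta>" for \<alpha>
    proof -
      have "(g \<alpha>, \<beta>) \<in> \<theta>"
        using that \<theta>_total[OF \<beta> g] by blast
      then show ?thesis
        using stable[OF \<open>\<alpha> \<in> Field k\<close>] \<beta> i \<theta>_trans by metis
    qed
    then have "{\<alpha> \<in> Field k. h i \<alpha> \<noteq> h \<beta> \<alpha>} \<subseteq> {\<alpha> \<in> Field k. (\<beta>, g \<alpha>) \<in> \<theta>}"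
      by blast
    then show ?thesis
      using ideal_on_subset[OF ideal null] by blast
  qed
  then show "\<exists>i0\<in>Field \<theta>. \<forall>i\<in>Field \<theta>. (i0, i) \<in> \<theta> \<longrightarrow> {\<alpha> \<in> Field k. h i \<alpha> \<noteq> h i0 \<alpha>} \<in> I"
    using \<beta> by blast
qed

lemma functions_bounded_if_increasing_functions_stabilize:
  assumes stabilize: "increasing_functions_stabilize k \<theta> I"
    and embeds: "|Field \<theta>| \<le>o |Field k|"
  shows "functions_bounded_mod k \<theta> I"
  unfolding functions_bounded_mod_def
proof (intro allI impI)
  fix f :: "'a \<Rightarrow> 'b" assume f: "\<forall>\<alpha>\<in>Field k. f \<alpha> \<in> Field \<theta>"
  obtain e where e: "inj_on e (Field \<theta>)" "e ` Field \<theta> \<subseteq> Field k"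
    using embeds card_of_ordLeq[of "Field \<theta>" "Field k"] by blast
  define r where "r = dir_image \<theta> e"
  define cut where "cut i x = (if (i, x) \<in> \<theta> then i else x)" for i x
  define S where "S \<alpha> = e ` under \<theta> (f \<alpha>)" for \<alpha>
  define h where "h i \<alpha> = e (cut i (f \<alpha>))" for i \<alpha>
  have "Well_order r"
    unfolding r_def using Well_order_dir_image[OF _ e(1)] wo_rel_\<theta> unfolding wo_rel_def by blast
  have "S \<alpha> \<subseteq> Field r \<and> |S \<alpha>| <o \<theta>" if \<alpha>: "\<alpha> \<in> Field k" for \<alpha>
  proof
    show "S \<alpha> \<subseteq> Field r"
      unfolding S_def r_def dir_image_Field[of \<theta> e] by (auto simp: under_def Field_def)
    obtain c where c: "c \<in> Field \<theta>" and "f \<alpha> \<in> underS \<theta> c"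
      using \<theta>_no_max f \<alpha> by blast
    then have "under \<theta> (f \<alpha>) \<subseteq> underS \<theta> c"
      using le_underS_trans by (auto simp: under_def)
    then have "|under \<theta> (f \<alpha>)| <o \<theta>"
      by (rule small_if_bounded[OF c])
    then show "|S \<alpha>| <o \<theta>"
      unfolding S_def by (rule ordLeq_ordLess_trans[OF card_of_image])
  qed
  moreover have "h i \<alpha> \<in> S \<alpha>" if "\<alpha> \<in> Field k" for i \<alpha>
    using that f \<theta>_refl unfolding h_def S_def cut_def under_def by auto
  moreover have "(h i \<alpha>, h j \<alpha>) \<in> r" if "(i, j) \<in> \<theta>" and "\<alpha> \<in> Field k" for i j \<alpha>
  proof -
    have "(cut i (f \<alpha>), cut j (f \<alpha>)) \<in> \<theta>"
      using that f \<theta>_trans[OF that(1)] \<theta>_refl unfolding cut_def by auto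
    then show ?thesis
      unfolding h_def r_def dir_image_def by blast
  qed
  ultimately obtain i0 where i0: "i0 \<in> Field \<theta>"
    and stable: "\<forall>i\<in>Field \<theta>. (i0, i) \<in> \<theta> \<longrightarrow> {\<alpha> \<in> Field k. h i \<alpha> \<noteq> h i0 \<alpha>} \<in> I"
    using stabilize[unfolded increasing_functions_stabilize_def, rule_format, OF \<open>Well_order r\<close>, of S h]
    by blast
  obtain c where c: "c \<in> Field \<theta>" and "i0 \<in> underS \<theta> c"
    using \<theta>_no_max[OF i0] by blast
  then have "{\<alpha> \<in> Field k. (c, f \<alpha>) \<in> \<theta>} \<subseteq> {\<alpha> \<in> Field k. h c \<alpha> \<noteq> h i0 \<alpha>}"
    using e(1) i0 f \<theta>_trans unfolding h_def cut_def inj_on_def underS_def by auto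
  then show "\<exists>\<beta>\<in>Field \<theta>. {\<alpha> \<in> Field k. (\<beta>, f \<alpha>) \<in> \<theta>} \<in> I"
    using stable c \<open>i0 \<in> underS \<theta> c\<close> ideal_on_subset[OF ideal] unfolding underS_def by blast
qed

lemma positive_interval_above:
  assumes ind: "indecomposable k \<theta> I" and f: "\<forall>\<alpha>\<in>Field k. f \<alpha> \<in> Field \<theta>"
    and pos: "{\<alpha> \<in> Field k. (b, f \<alpha>) \<in> \<theta>} \<notin> I"
  obtains c where "c \<in> Field \<theta>" and "{\<alpha> \<in> Field k. (b, f \<alpha>) \<in> \<theta> \<and> f \<alpha> \<in> underS \<theta> c} \<notin> I"
proof -
  define A where "A j = {\<alpha> \<in> Field k. f \<alpha> = j \<and> (b, j) \<in> \<theta>}" for j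
  have "(\<Union>j\<in>Field \<theta>. A j) = {\<alpha> \<in> Field k. (b, f \<alpha>) \<in> \<theta>}"
    using f unfolding A_def by auto
  then have "(\<forall>j\<in>Field \<theta>. A j \<subseteq> Field k) \<and> (\<Union>j\<in>Field \<theta>. A j) \<notin> I"
    using pos unfolding A_def by auto
  then obtain w where w: "w \<subseteq> Field \<theta>" "|w| <o \<theta>" and "(\<Union>j\<in>w. A j) \<notin> I"
    using ind[unfolded indecomposable_def, rule_format, of A] by blast
  moreover obtain c where "c \<in> Field \<theta>" and "w \<subseteq> underS \<theta> c"
    using bounded_if_small[OF w] by blast
  moreover have "(\<Union>j\<in>w. A j) \<subseteq> {\<alpha> \<in> Field k. (b, f \<alpha>) \<in> \<theta> \<and> f \<alpha> \<in> underS \<theta> c}"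
    using calculation unfolding A_def by blast
  ultimately show thesis
    using that ideal_on_subset[OF ideal] by blast
qed

lemma maximal_interval_family_cofinal:
  fixes f :: "'x \<Rightarrow> 'b" and g :: "'b \<Rightarrow> 'b" and X :: "'x set"
  defines "D \<equiv> \<lambda>b. {\<alpha> \<in> X. (b, f \<alpha>) \<in> \<theta> \<and> f \<alpha> \<in> underS \<theta> (g b)}"
  assumes g: "\<And>b. g b \<in> Field \<theta>" and M: "M \<subseteq> Field \<theta>" "disjoint_family_on D M"
    and maximal: "\<And>c. c \<in> Field \<theta> - M \<Longrightarrow> \<not> disjoint_family_on D (insert c M)"
  shows "cofinal M \<theta>"
proof (rule ccontr)
  assume "\<not> cofinal M \<theta>"
  then obtain a where a: "a \<in> Field \<theta>" and "M \<subseteq> underS \<theta> a"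
    using bounded_if_not_cofinal[OF M(1)] by blast
  then have "|g ` M| <o \<theta>"
    using ordLeq_ordLess_trans[OF card_of_image small_if_bounded] by blast
  then obtain a' where a': "a' \<in> Field \<theta>" and "g ` M \<subseteq> underS \<theta> a'"
    using bounded_if_small g by blast
  define c where "c = wo_rel.max2 \<theta> a a'"
  have c: "c \<in> Field \<theta>" "(a, c) \<in> \<theta>" "(a', c) \<in> \<theta>"
    unfolding c_def using wo_rel.max2_greater[OF wo_rel_\<theta> a a'] wo_rel.max2_among[OF wo_rel_\<theta> a a'] a a' by auto
  have "c \<notin> M"
    using \<open>M \<subseteq> underS \<theta> a\<close> le_imp_not_underS[OF c(2)] by blast
  have "D c \<inter> D b = {}" if "b \<in> M" for b
  proof -
    have "(g b, c) \<in> \<theta>"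
      using that \<open>g ` M \<subseteq> underS \<theta> a'\<close> underS_mono[OF c(3)] by (auto simp: underS_def)
    then have "underS \<theta> (g b) \<subseteq> underS \<theta> c"
      by (rule underS_mono)
    then show ?thesis
      unfolding D_def using le_imp_not_underS by blast
  qed
  then have "disjoint_family_on D (insert c M)"
    using M(2) disjoint_family_on_insert[OF \<open>c \<notin> M\<close>] by blast
  then show False
    using maximal c(1) \<open>c \<notin> M\<close> by blast
qed

lemma functions_bounded_if_weakly_saturated_indecomposable:
  assumes ws: "weakly_saturated k \<theta> I" and ind: "indecomposable k \<theta> I"
  shows "functions_bounded_mod k \<theta> I"
  unfolding functions_bounded_mod_def
proof (intro allI impI, rule ccontr)
  fix f :: "'a \<Rightarrow> 'b"
  assume f: "\<forall>\<alpha>\<in>Field k. f \<alpha> \<in> Field \<theta>"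
    and unbounded: "\<not> (\<exists>\<beta>\<in>Field \<theta>. {\<alpha> \<in> Field k. (\<beta>, f \<alpha>) \<in> \<theta>} \<in> I)"
  define D where "D b c = {\<alpha> \<in> Field k. (b, f \<alpha>) \<in> \<theta> \<and> f \<alpha> \<in> underS \<theta> c}" for b c
  have "\<exists>c\<in>Field \<theta>. D b c \<notin> I" if "b \<in> Field \<theta>" for b
    using positive_interval_above[OF ind f, of b] unbounded that unfolding D_def by blast
  then obtain g where g: "\<And>b. g b \<in> Field \<theta>" and Dg: "\<And>b. b \<in> Field \<theta> \<Longrightarrow> D b (g b) \<notin> I"
    using choose_index[of "Field \<theta>" "Field \<theta>" "\<lambda>b c. D b c \<notin> I"] Field_\<theta>_nonempty by auto
  obtain M where M: "M \<subseteq> Field \<theta>" "disjoint_family_on (\<lambda>b. D b (g b)) M"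
    and maximal: "\<And>c. c \<in> Field \<theta> - M \<Longrightarrow> \<not> disjoint_family_on (\<lambda>b. D b (g b)) (insert c M)"
    using maximal_disjoint_subfamily[of "Field \<theta>" "\<lambda>b. D b (g b)"] by blast
  have "cofinal M \<theta>"
    using maximal_interval_family_cofinal[of g M "Field k" f] g M maximal unfolding D_def by blast
  then have "|M| =o \<theta>"
    using regular_\<theta> M(1) unfolding regularCard_def by blast
  then have "|Field \<theta>| =o |M|"
    using ordIso_transitive[OF card_of_Field_ordIso[OF conjunct2[OF Cinfinite_\<theta>]] ordIso_symmetric] by blast
  then obtain \<phi> where \<phi>: "bij_betw \<phi> (Field \<theta>) M"
    using card_of_ordIso by blast
  have "disjoint_family_on (\<lambda>i. D (\<phi> i) (g (\<phi> i))) (Field \<theta>)"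
    using M(2) \<phi> unfolding disjoint_family_on_def bij_betw_def inj_on_def by blast
  moreover have "\<forall>i\<in>Field \<theta>. D (\<phi> i) (g (\<phi> i)) \<subseteq> Field k \<and> D (\<phi> i) (g (\<phi> i)) \<notin> I"
    using Dg \<phi> M(1) unfolding D_def bij_betw_def by blast
  ultimately show False
    using not_weakly_saturated_if_disjoint_family ws by blast
qed

end

theorem theorem2p6:
  fixes k :: "'a rel" and \<theta> :: "'b rel" and I :: "'a set set"
  assumes kappa: "Card_order k"
    and ideal: "ideal_on k I"
    and theta: "Cinfinite \<theta>" "regularCard \<theta>"
    and less: "ordLess2 \<theta> k"
  defines "C1 \<equiv> weakly_saturated k \<theta> I \<and> indecomposable k \<theta> I"
    and "C2 \<equiv> (\<forall>B :: 'b \<Rightarrow> 'a set.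
             (\<forall>i\<in>Field \<theta>. B i \<subseteq> Field k) \<and>
             (\<forall>i\<in>Field \<theta>. \<forall>j\<in>Field \<theta>. (i, j) \<in> \<theta> \<longrightarrow> B i \<subseteq> B j) \<longrightarrow>
             (\<exists>i0\<in>Field \<theta>. \<forall>i\<in>Field \<theta>. (i0, i) \<in> \<theta> \<longrightarrow>
                 eq_mod I (B i) (\<Union>j\<in>Field \<theta>. B j)))"
    and "C3 \<equiv> (\<forall>A :: 'b \<Rightarrow> 'a set.
             (\<forall>i\<in>Field \<theta>. A i \<subseteq> Field k \<and> A i \<notin> I) \<longrightarrow>
             (\<Inter>i\<in>Field \<theta>. \<Union>j\<in>{j \<in> Field \<theta>. (i, j) \<in> \<theta>}. A j) \<noteq> {})"
    and "C4 \<equiv> (\<forall>r :: 'a rel. Well_order r \<longrightarrow>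
             (\<forall>(S :: 'a \<Rightarrow> 'a set) (h :: 'b \<Rightarrow> 'a \<Rightarrow> 'a).
               (\<forall>\<alpha>\<in>Field k. S \<alpha> \<subseteq> Field r \<and> ordLess2 (card_of (S \<alpha>)) \<theta>) \<and>
               (\<forall>i\<in>Field \<theta>. \<forall>\<alpha>\<in>Field k. h i \<alpha> \<in> S \<alpha>) \<and>
               (\<forall>i\<in>Field \<theta>. \<forall>j\<in>Field \<theta>. (i, j) \<in> \<theta> \<longrightarrow>
                   (\<forall>\<alpha>\<in>Field k. (h i \<alpha>, h j \<alpha>) \<in> r)) \<longrightarrow>
               (\<exists>i0\<in>Field \<theta>. \<forall>i\<in>Field \<theta>. (i0, i) \<in> \<theta> \<longrightarrow>
                   {\<alpha> \<in> Field k. h i \<alpha> \<noteq> h i0 \<alpha>} \<in> I)))"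
    and "C5 \<equiv> (\<forall>f :: 'a \<Rightarrow> 'b. (\<forall>\<alpha>\<in>Field k. f \<alpha> \<in> Field \<theta>) \<longrightarrow>
             (\<exists>\<beta>\<in>Field \<theta>. {\<alpha> \<in> Field k. (\<beta>, f \<alpha>) \<in> \<theta>} \<in> I))"
  shows "(C1 \<longleftrightarrow> C2) \<and> (C1 \<longleftrightarrow> C3) \<and> (C1 \<longleftrightarrow> C4) \<and> (C1 \<longleftrightarrow> C5)"
proof -
  interpret ideal_regular_card k \<theta> I
    using ideal theta by unfold_locales
  have conditions: "C2 = increasing_sequences_stabilize k \<theta> I" "C3 = positive_limsup_nonempty k \<theta> I"
    "C4 = increasing_functions_stabilize k \<theta> I" "C5 = functions_bounded_mod k \<theta> I"
    unfolding C2_def C3_def C4_def C5_def increasing_sequences_stabilize_def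
      positive_limsup_nonempty_def increasing_functions_stabilize_def functions_bounded_mod_def
    by (rule refl)+
  have "|Field \<theta>| \<le>o |Field k|"
    using card_of_mono2[OF ordLess_imp_ordLeq[OF less]] .
  then show ?thesis
    unfolding C1_def conditions
    using weakly_saturated_if_functions_bounded indecomposable_if_functions_bounded
      functions_bounded_if_weakly_saturated_indecomposable
      increasing_sequences_stabilize_if_functions_bounded functions_bounded_if_increasing_sequences_stabilize
      positive_limsup_nonempty_if_functions_bounded functions_bounded_if_positive_limsup_nonempty
      increasing_functions_stabilize_if_functions_bounded functions_bounded_if_increasing_functions_stabilize
    by blast
qed

end
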